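(* Let $I,S,C\subseteq G$ be pairwise disjoint. Then $I$ is AD-separated from $S$ by $C$ if and only if there exists a closed subset $K$ of $G$ such that $S\subseteq K$, $P(K)\subseteq C$, $I\subseteq N'(K)$ and $D(K)\cap C=\emptyset$.
   Context: $G$ is a finite set of nodes forming a DAG. $P(s)$: parents of $s$; $s\sqsubseteq v$: directed path (possibly trivial) from $s$ to $v$; $s\sqsubset v$: additionally $s\neq v$; $D(s)=\{v:s\sqsubset v\}$. For $K\subseteq G$: $P(K)=(\bigcup_{s\in K}P(s))\setminus K$, $D(K)=(\bigcup_{s\in K}D(s))\setminus K$, $N(K)=G\setminus(K\cup D(K))$, $N'(K)=N(K)\setminus P(K)$; $K$ is closed if $s\sqsubseteq k\sqsubseteq t$ with $s,t\in K$, $k\in G$ implies $k\in K$. A path $s_1,\dots,s_n$ ($n\geq1$) is a sequence of nodes in which consecutive nodes are joined by an edge in either direction. It is blocked by $C\subseteq G$ if at least one holds: (B1) $s_1\in C$; (B2) some $s_i$ with $1<i<n$ has $s_i\to s_{i+1}$ and $s_i\in C$; (B3) some $s_i$ with $1<i<n$ has $s_{i-1}\to s_i\leftarrow s_{i+1}$, $s_i\notin C$ and $D(s_i)\cap C=\emptyset$; (B4) $s_n\in C$. $I$ is AD-separated from $S$ by $C$ if every path $i=s_1,\dots,s_n=s$ ($n\ge1$) from any $i\in I$ to any $s\in S$ is blocked by $C$. *)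

theory Defs
  imports Main
begin

definition is_dag :: "'a set \<Rightarrow> ('a \<Rightarrow> 'a \<Rightarrow> bool) \<Rightarrow> bool" where
  "is_dag G E \<longleftrightarrow> finite G \<and> (\<forall>a b. E a b \<longrightarrow> a \<in> G \<and> b \<in> G)
     \<and> (\<forall>a. \<not> (E\<^sup>+\<^sup>+ a a))"

definition par :: "'a set \<Rightarrow> ('a \<Rightarrow> 'a \<Rightarrow> bool) \<Rightarrow> 'a \<Rightarrow> 'a set" where
  "par G E s = {p \<in> G. E p s}"

definition dle :: "'a set \<Rightarrow> ('a \<Rightarrow> 'a \<Rightarrow> bool) \<Rightarrow> 'a \<Rightarrow> 'a \<Rightarrow> bool" where
  "dle G E s v \<longleftrightarrow> s \<in> G \<and> v \<in> G \<and> E\<^sup>*\<^sup>* s v"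

definition dlt :: "'a set \<Rightarrow> ('a \<Rightarrow> 'a \<Rightarrow> bool) \<Rightarrow> 'a \<Rightarrow> 'a \<Rightarrow> bool" where
  "dlt G E s v \<longleftrightarrow> dle G E s v \<and> s \<noteq> v"

definition desc :: "'a set \<Rightarrow> ('a \<Rightarrow> 'a \<Rightarrow> bool) \<Rightarrow> 'a \<Rightarrow> 'a set" where
  "desc G E s = {v \<in> G. dlt G E s v}"

definition parS :: "'a set \<Rightarrow> ('a \<Rightarrow> 'a \<Rightarrow> bool) \<Rightarrow> 'a set \<Rightarrow> 'a set" where
  "parS G E K = (\<Union>s\<in>K. par G E s) - K"

definition descS :: "'a set \<Rightarrow> ('a \<Rightarrow> 'a \<Rightarrow> bool) \<Rightarrow> 'a set \<Rightarrow> 'a set" where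
  "descS G E K = (\<Union>s\<in>K. desc G E s) - K"

definition nonD :: "'a set \<Rightarrow> ('a \<Rightarrow> 'a \<Rightarrow> bool) \<Rightarrow> 'a set \<Rightarrow> 'a set" where
  "nonD G E K = G - (K \<union> descS G E K)"

definition nonDP :: "'a set \<Rightarrow> ('a \<Rightarrow> 'a \<Rightarrow> bool) \<Rightarrow> 'a set \<Rightarrow> 'a set" where
  "nonDP G E K = nonD G E K - parS G E K"

definition closed_set :: "'a set \<Rightarrow> ('a \<Rightarrow> 'a \<Rightarrow> bool) \<Rightarrow> 'a set \<Rightarrow> bool" where
  "closed_set G E K \<longleftrightarrow> (\<forall>s t k. s \<in> K \<and> t \<in> K \<and> k \<in> G \<and> dle G E s k \<and> dle G E k t \<longrightarrow> k \<in> K)"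

text \<open>A path s_1..s_n (n \<ge> 1) as a nonempty list; xs ! (i-1) is s_i.\<close>
definition is_path :: "'a set \<Rightarrow> ('a \<Rightarrow> 'a \<Rightarrow> bool) \<Rightarrow> 'a list \<Rightarrow> bool" where
  "is_path G E xs \<longleftrightarrow> xs \<noteq> [] \<and> set xs \<subseteq> G \<and>
     (\<forall>j. j + 1 < length xs \<longrightarrow> E (xs ! j) (xs ! (j + 1)) \<or> E (xs ! (j + 1)) (xs ! j))"

text \<open>Blocking, with 0-based indices: inner positions are 0 < j < length xs - 1.\<close>
definition blocked :: "'a set \<Rightarrow> ('a \<Rightarrow> 'a \<Rightarrow> bool) \<Rightarrow> 'a set \<Rightarrow> 'a list \<Rightarrow> bool" where
  "blocked G E C xs \<longleftrightarrow>
     hd xs \<in> C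
   \<or> (\<exists>j. 0 < j \<and> j + 1 < length xs \<and> E (xs ! j) (xs ! (j + 1)) \<and> xs ! j \<in> C)
   \<or> (\<exists>j. 0 < j \<and> j + 1 < length xs \<and> E (xs ! (j - 1)) (xs ! j) \<and> E (xs ! (j + 1)) (xs ! j)
          \<and> xs ! j \<notin> C \<and> desc G E (xs ! j) \<inter> C = {})
   \<or> last xs \<in> C"

definition AD_separated :: "'a set \<Rightarrow> ('a \<Rightarrow> 'a \<Rightarrow> bool) \<Rightarrow> 'a set \<Rightarrow> 'a set \<Rightarrow> 'a set \<Rightarrow> bool" where
  "AD_separated G E I S C \<longleftrightarrow>
     (\<forall>xs. is_path G E xs \<and> hd xs \<in> I \<and> last xs \<in> S \<longrightarrow> blocked G E C xs)"

end

theory Submission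
  imports Defs
begin

text \<open>For the forward direction take for \<open>K\<close> the nodes \<open>x\<close> joined to \<open>S\<close> by a path that is open
  (not blocked at any inner node) and stays open whatever neighbour of \<open>x\<close> is put in front of it.
  Extending such paths shows that \<open>K\<close> contains every parent outside \<open>C\<close> and every child that is
  an ancestor of \<open>C\<close>; this makes \<open>K\<close> closed with \<open>P(K) \<subseteq> C\<close> and \<open>D(K) \<inter> C = {}\<close>, and since
  open paths also start at every descendant of \<open>K\<close>, separation keeps \<open>I\<close> out of \<open>K \<union> D(K)\<close>.
  Conversely, a path from \<open>I\<close> to \<open>S\<subseteq>K\<close> enters \<open>K\<close> either from a parent, which lies in \<open>C\<close>,
  or from a child; in the latter case, following the path backwards from there, it stays in
  \<open>D(K)\<close> until it meets a collider in \<open>D(K)\<close>, which blocks it because \<open>D(K)\<close> avoids \<open>C\<close>.\<close>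

lemma dag_edge_in_G:
  assumes "is_dag G E" "E a b" shows "a \<in> G" "b \<in> G"
  using assms unfolding is_dag_def by blast+

lemma dag_edge_asym:
  assumes "is_dag G E" "E a b" shows "\<not> E b a"
proof
  assume "E b a"
  with assms(2) have "E\<^sup>+\<^sup>+ a a" by auto
  with assms(1) show False unfolding is_dag_def by blast
qed

lemma mem_desc_iff: "v \<in> desc G E s \<longleftrightarrow> s \<in> G \<and> v \<in> G \<and> E\<^sup>*\<^sup>* s v \<and> s \<noteq> v"
  unfolding desc_def dlt_def dle_def by auto

definition active_at :: "'a set \<Rightarrow> ('a \<Rightarrow> 'a \<Rightarrow> bool) \<Rightarrow> 'a set \<Rightarrow> 'a \<Rightarrow> 'a \<Rightarrow> 'a \<Rightarrow> bool" where
  "active_at G E C a b c \<longleftrightarrow>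
     \<not> (E b c \<and> b \<in> C) \<and> \<not> (E a b \<and> E c b \<and> b \<notin> C \<and> desc G E b \<inter> C = {})"

lemma blocked_iff_not_active:
  "blocked G E C xs \<longleftrightarrow> hd xs \<in> C \<or> last xs \<in> C \<or>
     (\<exists>j. 0 < j \<and> j + 1 < length xs \<and> \<not> active_at G E C (xs ! (j - 1)) (xs ! j) (xs ! (j + 1)))"
  unfolding blocked_def active_at_def by blast

definition open_path :: "'a set \<Rightarrow> ('a \<Rightarrow> 'a \<Rightarrow> bool) \<Rightarrow> 'a set \<Rightarrow> 'a set \<Rightarrow> 'a list \<Rightarrow> bool" where
  "open_path G E C S xs \<longleftrightarrow> is_path G E xs \<and> last xs \<in> S \<and>
     (\<forall>j. 0 < j \<longrightarrow> j + 1 < length xs \<longrightarrow> active_at G E C (xs ! (j - 1)) (xs ! j) (xs ! (j + 1)))"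

lemma open_path_singleton: "s \<in> S \<Longrightarrow> s \<in> G \<Longrightarrow> open_path G E C S [s]"
  unfolding open_path_def is_path_def by simp

lemma open_path_Cons:
  assumes xs: "open_path G E C S xs" and "y \<in> G" and "E y (hd xs) \<or> E (hd xs) y"
    and "Suc 0 < length xs \<Longrightarrow> active_at G E C y (hd xs) (xs ! 1)"
  shows "open_path G E C S (y # xs)"
proof -
  have "xs \<noteq> []" using xs unfolding open_path_def is_path_def by blast
  then have "hd xs = xs ! 0" by (simp add: hd_conv_nth)
  have edges: "E ((y # xs) ! j) ((y # xs) ! (j + 1)) \<or> E ((y # xs) ! (j + 1)) ((y # xs) ! j)"
    if "j + 1 < length (y # xs)" for j
    using that assms \<open>hd xs = xs ! 0\<close> unfolding open_path_def is_path_def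
    by (cases j) auto
  have active: "active_at G E C ((y # xs) ! (j - 1)) ((y # xs) ! j) ((y # xs) ! (j + 1))"
    if "0 < j" "j + 1 < length (y # xs)" for j
  proof (cases "j = 1")
    case True
    with that assms \<open>hd xs = xs ! 0\<close> show ?thesis by simp
  next
    case False
    with that have "\<exists>i. j = Suc (Suc i)" by presburger
    then obtain i where j: "j = Suc (Suc i)" by blast
    with that have "Suc i + 1 < length xs" by simp
    with xs have "active_at G E C (xs ! i) (xs ! Suc i) (xs ! (Suc i + 1))"
      unfolding open_path_def by (metis diff_Suc_1 zero_less_Suc)
    with j show ?thesis by simp
  qed
  show ?thesis
    using xs \<open>y \<in> G\<close> \<open>xs \<noteq> []\<close> edges active
    unfolding open_path_def is_path_def by (simp del: One_nat_def)
qed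

definition open_via :: "'a set \<Rightarrow> ('a \<Rightarrow> 'a \<Rightarrow> bool) \<Rightarrow> 'a set \<Rightarrow> 'a set \<Rightarrow> 'a set \<Rightarrow> 'a \<Rightarrow> bool" where
  "open_via G E C S N x \<longleftrightarrow>
     (\<exists>xs. open_path G E C S (x # xs) \<and> (\<forall>y\<in>N. open_path G E C S (y # x # xs)))"

definition neighbours :: "'a set \<Rightarrow> ('a \<Rightarrow> 'a \<Rightarrow> bool) \<Rightarrow> 'a \<Rightarrow> 'a set" where
  "neighbours G E x = {y \<in> G. E y x \<or> E x y}"

definition children :: "'a set \<Rightarrow> ('a \<Rightarrow> 'a \<Rightarrow> bool) \<Rightarrow> 'a \<Rightarrow> 'a set" where
  "children G E x = {y \<in> G. E x y}"

lemma open_via_mono: "open_via G E C S N x \<Longrightarrow> M \<subseteq> N \<Longrightarrow> open_via G E C S M x"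
  unfolding open_via_def by blast

lemma open_via_Cons:
  assumes "open_path G E C S (y # x # xs)"
    and "\<And>z. z \<in> N \<Longrightarrow> z \<in> G \<and> (E z y \<or> E y z) \<and> active_at G E C z y x"
  shows "open_via G E C S N y"
proof -
  have "open_path G E C S (z # y # x # xs)" if "z \<in> N" for z
    using assms that by (intro open_path_Cons[of _ _ _ _ "y # x # xs"]) auto
  with assms(1) show ?thesis unfolding open_via_def by blast
qed

lemma not_mem_if_open_via:
  assumes "AD_separated G E I S C" "I \<inter> C = {}" "S \<inter> C = {}" "open_via G E C S N x"
  shows "x \<notin> I"
proof
  assume "x \<in> I"
  obtain xs where "open_path G E C S (x # xs)" using assms(4) unfolding open_via_def by blast
  with assms(1-3) \<open>x \<in> I\<close> show False
    unfolding AD_separated_def open_path_def blocked_iff_not_active by fastforce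
qed

lemma open_via_neighbours_of_mem:
  assumes "s \<in> S" "S \<subseteq> G" shows "open_via G E C S (neighbours G E s) s"
proof -
  have "open_path G E C S [s]" using assms by (intro open_path_singleton) auto
  then show ?thesis
    unfolding open_via_def neighbours_def
    by (intro exI[of _ "[]"]) (auto intro: open_path_Cons[of _ _ _ _ "[s]"])
qed

lemma open_via_neighbours_parent:
  assumes dag: "is_dag G E" and x: "open_via G E C S (neighbours G E x) x"
    and "E u x" "u \<notin> C"
  shows "open_via G E C S (neighbours G E u) u"
proof -
  obtain xs where ext: "\<And>y. y \<in> neighbours G E x \<Longrightarrow> open_path G E C S (y # x # xs)"
    using x unfolding open_via_def by blast
  have "u \<in> neighbours G E x" using dag_edge_in_G[OF dag \<open>E u x\<close>] \<open>E u x\<close>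
    unfolding neighbours_def by blast
  then have path: "open_path G E C S (u # x # xs)" by (rule ext)
  have active: "active_at G E C z u x" for z
    using \<open>u \<notin> C\<close> dag_edge_asym[OF dag \<open>E u x\<close>] unfolding active_at_def by blast
  show ?thesis by (rule open_via_Cons[OF path]) (use active in \<open>auto simp: neighbours_def\<close>)
qed

text \<open>The collider at \<open>y\<close> cannot block: \<open>y\<close> is an ancestor-or-self of \<open>c \<in> C\<close>.\<close>

lemma open_via_neighbours_child:
  assumes dag: "is_dag G E" and x: "open_via G E C S (neighbours G E x) x"
    and "E x y" and "c \<in> C" "E\<^sup>*\<^sup>* y c"
  shows "open_via G E C S (neighbours G E y) y"
proof -
  obtain xs where ext: "\<And>y. y \<in> neighbours G E x \<Longrightarrow> open_path G E C S (y # x # xs)"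
    using x unfolding open_via_def by blast
  have "y \<in> G" using dag_edge_in_G[OF dag \<open>E x y\<close>] by blast
  then have "y \<in> neighbours G E x" using \<open>E x y\<close> unfolding neighbours_def by blast
  then have path: "open_path G E C S (y # x # xs)" by (rule ext)
  have "y \<in> C \<or> c \<in> desc G E y"
  proof (cases "y = c")
    case False
    with \<open>E\<^sup>*\<^sup>* y c\<close> obtain z where "E z c" by (metis rtranclp.cases)
    with False \<open>y \<in> G\<close> \<open>E\<^sup>*\<^sup>* y c\<close> show ?thesis
      using dag_edge_in_G[OF dag] by (auto simp: mem_desc_iff)
  qed (use \<open>c \<in> C\<close> in simp)
  then have active: "active_at G E C z y x" for z
    using \<open>c \<in> C\<close> dag_edge_asym[OF dag \<open>E x y\<close>] unfolding active_at_def by blast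
  show ?thesis by (rule open_via_Cons[OF path]) (use active in \<open>auto simp: neighbours_def\<close>)
qed

lemma open_via_children_child:
  assumes dag: "is_dag G E" and x: "open_via G E C S (children G E x) x" and "E x y"
  shows "open_via G E C S (children G E y) y"
proof -
  obtain xs where ext: "\<And>y. y \<in> children G E x \<Longrightarrow> open_path G E C S (y # x # xs)"
    using x unfolding open_via_def by blast
  have "y \<in> children G E x" using dag_edge_in_G[OF dag \<open>E x y\<close>] \<open>E x y\<close>
    unfolding children_def by blast
  then have path: "open_path G E C S (y # x # xs)" by (rule ext)
  have active: "active_at G E C z y x" if "E y z" for z
    using dag_edge_asym[OF dag \<open>E x y\<close>] dag_edge_asym[OF dag that] unfolding active_at_def by blast
  show ?thesis by (rule open_via_Cons[OF path]) (use active in \<open>auto simp: children_def\<close>)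
qed

lemma open_via_children_descendant:
  assumes "is_dag G E" "open_via G E C S (children G E x) x" "E\<^sup>*\<^sup>* x y"
  shows "open_via G E C S (children G E y) y"
  using assms(3,2) by induction (auto intro: open_via_children_child[OF assms(1)])

definition open_reach :: "'a set \<Rightarrow> ('a \<Rightarrow> 'a \<Rightarrow> bool) \<Rightarrow> 'a set \<Rightarrow> 'a set \<Rightarrow> 'a set" where
  "open_reach G E C S = {x. open_via G E C S (neighbours G E x) x}"

lemma open_reach_subset: "open_reach G E C S \<subseteq> G"
  unfolding open_reach_def open_via_def open_path_def is_path_def by auto

lemma open_reach_ancestor_of_C:
  assumes dag: "is_dag G E" and "x \<in> open_reach G E C S" "E\<^sup>*\<^sup>* x y" "E\<^sup>*\<^sup>* y c" "c \<in> C"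
  shows "y \<in> open_reach G E C S"
  using assms(3,4)
proof (induction rule: rtranclp_induct)
  case base
  with assms(2) show ?case by simp
next
  case (step z y)
  then have "z \<in> open_reach G E C S" by (meson converse_rtranclp_into_rtranclp)
  with step assms(5) show ?case
    unfolding open_reach_def by (blast intro: open_via_neighbours_child[OF dag])
qed

lemma closed_set_open_reach:
  assumes dag: "is_dag G E" shows "closed_set G E (open_reach G E C S)"
  unfolding closed_set_def
proof (intro allI impI)
  fix s t k
  assume "s \<in> open_reach G E C S \<and> t \<in> open_reach G E C S \<and> k \<in> G \<and> dle G E s k \<and> dle G E k t"
  then have s: "s \<in> open_reach G E C S" and "t \<in> open_reach G E C S"
    and "E\<^sup>*\<^sup>* k t" "E\<^sup>*\<^sup>* s k" unfolding dle_def by auto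
  from \<open>E\<^sup>*\<^sup>* k t\<close> \<open>E\<^sup>*\<^sup>* s k\<close> \<open>t \<in> open_reach G E C S\<close> show "k \<in> open_reach G E C S"
  proof (induction rule: converse_rtranclp_induct)
    case (step y z)
    then have "E\<^sup>*\<^sup>* s y" "E\<^sup>*\<^sup>* s z" by auto
    with step have "z \<in> open_reach G E C S" by blast
    show ?case
    proof (cases "y \<in> C")
      case True
      show ?thesis by (rule open_reach_ancestor_of_C[OF dag s \<open>E\<^sup>*\<^sup>* s y\<close> _ True]) simp
    next
      case False
      with \<open>z \<in> open_reach G E C S\<close> \<open>E y z\<close> show ?thesis
        unfolding open_reach_def mem_Collect_eq by (rule open_via_neighbours_parent[OF dag])
    qed
  qed simp
qed

lemma parS_open_reach_subset:
  assumes dag: "is_dag G E" shows "parS G E (open_reach G E C S) \<subseteq> C"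
proof
  fix u assume "u \<in> parS G E (open_reach G E C S)"
  then obtain x where "x \<in> open_reach G E C S" "E u x" "u \<notin> open_reach G E C S"
    unfolding parS_def par_def by blast
  then show "u \<in> C"
    unfolding open_reach_def mem_Collect_eq using open_via_neighbours_parent[OF dag] by blast
qed

lemma descS_open_reach_disjoint:
  assumes dag: "is_dag G E" shows "descS G E (open_reach G E C S) \<inter> C = {}"
proof -
  have "c \<in> open_reach G E C S" if "k \<in> open_reach G E C S" "c \<in> desc G E k" "c \<in> C" for k c
    using that open_reach_ancestor_of_C[OF dag that(1) _ rtranclp.rtrancl_refl that(3)]
    by (simp add: mem_desc_iff)
  then show ?thesis unfolding descS_def by blast
qed

lemma open_reach_descendant_open_via_children:
  assumes dag: "is_dag G E" and "x \<in> open_reach G E C S" "E\<^sup>*\<^sup>* x y"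
  shows "open_via G E C S (children G E y) y"
proof -
  have "children G E x \<subseteq> neighbours G E x" unfolding children_def neighbours_def by blast
  with assms(2) have "open_via G E C S (children G E x) x"
    unfolding open_reach_def mem_Collect_eq by (rule open_via_mono)
  then show ?thesis using assms(3) by (rule open_via_children_descendant[OF dag])
qed

theorem closed_set_of_AD_separated:
  assumes dag: "is_dag G E" and "I \<subseteq> G" "S \<subseteq> G" "I \<inter> C = {}" "S \<inter> C = {}"
    and sep: "AD_separated G E I S C"
  defines "K \<equiv> open_reach G E C S"
  shows "K \<subseteq> G \<and> closed_set G E K \<and> S \<subseteq> K \<and> parS G E K \<subseteq> C
         \<and> I \<subseteq> nonDP G E K \<and> descS G E K \<inter> C = {}"
proof -
  have "S \<subseteq> K"
    unfolding K_def open_reach_def using open_via_neighbours_of_mem[OF _ \<open>S \<subseteq> G\<close>] by blast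
  have "i \<notin> K" "i \<notin> descS G E K" if "i \<in> I" for i
  proof -
    show "i \<notin> K"
      using that not_mem_if_open_via[OF sep assms(4,5)] unfolding K_def open_reach_def by blast
    show "i \<notin> descS G E K"
    proof
      assume "i \<in> descS G E K"
      then obtain k where "k \<in> open_reach G E C S" "E\<^sup>*\<^sup>* k i"
        unfolding K_def descS_def by (auto simp: mem_desc_iff)
      then have "open_via G E C S (children G E i) i"
        by (rule open_reach_descendant_open_via_children[OF dag])
      with that show False using not_mem_if_open_via[OF sep assms(4,5)] by blast
    qed
  qed
  moreover have "parS G E K \<subseteq> C" unfolding K_def by (rule parS_open_reach_subset[OF dag])
  ultimately have "I \<subseteq> nonDP G E K"
    using assms(2,4) unfolding nonDP_def nonD_def by blast
  with \<open>S \<subseteq> K\<close> \<open>parS G E K \<subseteq> C\<close> show ?thesis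
    unfolding K_def
    using open_reach_subset closed_set_open_reach[OF dag] descS_open_reach_disjoint[OF dag]
    by (simp only: simp_thms)
qed

lemma descS_desc_subset:
  assumes "closed_set G E K" "x \<in> descS G E K" "v \<in> desc G E x"
  shows "v \<in> descS G E K"
proof -
  obtain k where k: "k \<in> K" "x \<in> desc G E k" "x \<notin> K"
    using assms(2) unfolding descS_def by blast
  have "v \<notin> K"
  proof
    assume "v \<in> K"
    moreover have "dle G E k x" "dle G E x v" "x \<in> G"
      using k(2) assms(3) by (auto simp: mem_desc_iff dle_def)
    ultimately have "x \<in> K"
      using k(1) assms(1) unfolding closed_set_def by blast
    with k show False by blast
  qed
  moreover have "v \<in> desc G E k"
    using k assms(3) \<open>v \<notin> K\<close> by (auto simp: mem_desc_iff intro: rtranclp_trans)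
  ultimately show ?thesis using k unfolding descS_def by blast
qed

lemma descS_edge:
  assumes "is_dag G E" "closed_set G E K" "x \<in> descS G E K" "E x y"
  shows "y \<in> descS G E K"
  using descS_desc_subset[OF assms(2,3)] assms(3) dag_edge_in_G[OF assms(1,4)]
    dag_edge_asym[OF assms(1,4)] assms(4)
  by (auto simp: mem_desc_iff)

text \<open>Walking backwards along edges that point backwards stays in a set closed under children,
  which the path must leave before reaching its start: where it leaves, there is a collider.\<close>

lemma path_backward_collider:
  assumes path: "is_path G E xs" and "hd xs \<notin> D" and D: "\<And>x y. x \<in> D \<Longrightarrow> E x y \<Longrightarrow> y \<in> D"
    and "k + 1 < length xs" "xs ! k \<in> D" "E (xs ! (k + 1)) (xs ! k)"
  shows "\<exists>m. 0 < m \<and> m \<le> k \<and> xs ! m \<in> D \<and> E (xs ! (m - 1)) (xs ! m) \<and> E (xs ! (m + 1)) (xs ! m)"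
  using assms(4-6)
proof (induction k)
  case 0
  with path \<open>hd xs \<notin> D\<close> show ?case unfolding is_path_def by (simp add: hd_conv_nth)
next
  case (Suc k)
  have "E (xs ! k) (xs ! Suc k) \<or> E (xs ! Suc k) (xs ! k)"
    using path Suc.prems(1) unfolding is_path_def by simp
  then show ?case
  proof
    assume "E (xs ! k) (xs ! Suc k)"
    with Suc.prems show ?case by (intro exI[of _ "Suc k"]) simp
  next
    assume "E (xs ! Suc k) (xs ! k)"
    with Suc.prems D have "\<exists>m. 0 < m \<and> m \<le> k \<and> xs ! m \<in> D \<and> E (xs ! (m - 1)) (xs ! m) \<and> E (xs ! (m + 1)) (xs ! m)"
      by (intro Suc.IH) auto
    then show ?case using le_SucI by blast
  qed
qed

theorem AD_separated_of_closed_set: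
  assumes dag: "is_dag G E" and cl: "closed_set G E K" and "S \<subseteq> K" "parS G E K \<subseteq> C"
    and I: "I \<subseteq> nonDP G E K" and DC: "descS G E K \<inter> C = {}"
  shows "AD_separated G E I S C"
  unfolding AD_separated_def
proof (intro allI impI)
  fix xs assume "is_path G E xs \<and> hd xs \<in> I \<and> last xs \<in> S"
  then have path: "is_path G E xs" and hd: "hd xs \<notin> K" "hd xs \<notin> descS G E K" "hd xs \<notin> parS G E K"
    and "last xs \<in> K"
    using I \<open>S \<subseteq> K\<close> unfolding nonDP_def nonD_def by auto
  then have "xs \<noteq> []" unfolding is_path_def by blast
  with \<open>last xs \<in> K\<close> have "\<exists>j. j < length xs \<and> xs ! j \<in> K"
    by (intro exI[of _ "length xs - 1"]) (simp add: last_conv_nth)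
  then obtain j where j: "j < length xs" "xs ! j \<in> K" and before: "\<And>i. i < j \<Longrightarrow> xs ! i \<notin> K"
    by (auto simp: exists_least_iff[of "\<lambda>j. j < length xs \<and> xs ! j \<in> K"] dest: order.strict_trans)
  from hd j \<open>xs \<noteq> []\<close> obtain k where k: "j = k + 1" by (metis Suc_eq_plus1 hd_conv_nth not0_implies_Suc)
  have "xs ! k \<in> G" "xs ! j \<in> G" using path j k unfolding is_path_def by auto
  have "E (xs ! k) (xs ! j) \<or> E (xs ! j) (xs ! k)" using path j k unfolding is_path_def by simp
  then show "blocked G E C xs"
  proof
    assume "E (xs ! k) (xs ! j)"
    with j before[of k] k \<open>xs ! k \<in> G\<close> have "xs ! k \<in> parS G E K"
      unfolding parS_def par_def by auto
    with hd \<open>xs \<noteq> []\<close> have "0 < k" by (metis gr0I hd_conv_nth)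
    with \<open>E (xs ! k) (xs ! j)\<close> \<open>xs ! k \<in> parS G E K\<close> \<open>parS G E K \<subseteq> C\<close> j k show ?thesis
      unfolding blocked_def by auto
  next
    assume "E (xs ! j) (xs ! k)"
    with j before[of k] k \<open>xs ! k \<in> G\<close> \<open>xs ! j \<in> G\<close> dag_edge_asym[OF dag] have "xs ! k \<in> descS G E K"
      unfolding descS_def by (auto simp: mem_desc_iff)
    have "\<exists>m. 0 < m \<and> m \<le> k \<and> xs ! m \<in> descS G E K
        \<and> E (xs ! (m - 1)) (xs ! m) \<and> E (xs ! (m + 1)) (xs ! m)"
      by (rule path_backward_collider[OF path hd(2) descS_edge[OF dag cl]])
        (use j k \<open>xs ! k \<in> descS G E K\<close> \<open>E (xs ! j) (xs ! k)\<close> in auto)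
    then obtain m where m: "0 < m" "m \<le> k" "xs ! m \<in> descS G E K"
      "E (xs ! (m - 1)) (xs ! m)" "E (xs ! (m + 1)) (xs ! m)" by blast
    have "xs ! m \<notin> C" "desc G E (xs ! m) \<inter> C = {}"
      using m(3) DC descS_desc_subset[OF cl m(3)] by blast+
    with m j k show ?thesis unfolding blocked_def by (intro disjI2 disjI1 exI[of _ m]) simp
  qed
qed

theorem proposition2:
  fixes G :: "'a set" and E :: "'a \<Rightarrow> 'a \<Rightarrow> bool" and I S C :: "'a set"
  assumes "is_dag G E"
    and "I \<subseteq> G" and "S \<subseteq> G" and "C \<subseteq> G"
    and "I \<inter> S = {}" and "I \<inter> C = {}" and "S \<inter> C = {}"
  shows "AD_separated G E I S C \<longleftrightarrow>
    (\<exists>K. K \<subseteq> G \<and> closed_set G E K \<and> S \<subseteq> K \<and> parS G E K \<subseteq> C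
         \<and> I \<subseteq> nonDP G E K \<and> descS G E K \<inter> C = {})"
proof
  assume "AD_separated G E I S C"
  from closed_set_of_AD_separated[OF assms(1-3,6,7) this] show "\<exists>K. K \<subseteq> G \<and> closed_set G E K
      \<and> S \<subseteq> K \<and> parS G E K \<subseteq> C \<and> I \<subseteq> nonDP G E K \<and> descS G E K \<inter> C = {}"
    by (intro exI)
next
  assume "\<exists>K. K \<subseteq> G \<and> closed_set G E K \<and> S \<subseteq> K \<and> parS G E K \<subseteq> C
         \<and> I \<subseteq> nonDP G E K \<and> descS G E K \<inter> C = {}"
  then obtain K where "closed_set G E K" "S \<subseteq> K" "parS G E K \<subseteq> C" "I \<subseteq> nonDP G E K"
    "descS G E K \<inter> C = {}" by blast
  then show "AD_separated G E I S C" by (rule AD_separated_of_closed_set[OF assms(1)])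
qed

end
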